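(* Let $A$ be a commutative Noetherian ring containing a commutative subring $\mathbb{K}$, and let $y_1,\ldots,y_n\in A$. Let $S=\mathbb{K}[x_1,\ldots,x_n]$, let $\varphi:S\to S$ be a flat $\mathbb{K}$-algebra endomorphism with $\varphi(x_i)=s_ix_i$ for nonzero $s_i\in S$, let $\psi:S\to A$ be the $\mathbb{K}$-algebra homomorphism with $\psi(x_i)=y_i$, and let $\Phi:A\to A$ be a $\mathbb{K}$-algebra homomorphism with $\Phi\circ\psi=\psi\circ\varphi$. Assume that $\Phi$ is flat and that $y_1,\ldots,y_n$ is an $A$-Koszul regular sequence. Then the $\varphi$-Koszul complex $\mathcal{FK}_\bullet(y_1,\ldots,y_n;A)$ is a finite free resolution of $A/I_n$ in the category of left $A[\Theta;\Phi]$-modules, where $I_n=\langle y_1,\ldots,y_n\rangle$.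
   Context: For a commutative ring $B$ and ring endomorphism $\phi$ of $B$, the left skew polynomial ring $B[\Theta;\phi]$ is the ring which is a free left $B$-module with basis $\{\Theta^i\}_{i\geq0}$ and multiplication determined by $\Theta b=\phi(b)\Theta$ for $b\in B$. A sequence $f_1,\dots,f_n$ in a commutative ring $R$ is a Koszul regular sequence if the Koszul complex $K_\bullet(f_1,\ldots,f_n;R)$ is a free resolution of $R/\langle f_1,\dots,f_n\rangle$ (i.e. has homology only in degree $0$). Write $t_i=\psi(s_i)$, so $\Phi(y_i)=t_iy_i$; for $J=\{j_1<\cdots<j_k\}\subseteq\{1,\dots,n\}$ put $t_J=t_{j_1}\cdots t_{j_k}$ ($t_\emptyset=1$) and $\mathbf{e}_J=\mathbf{e}_{j_1}\wedge\cdots\wedge\mathbf{e}_{j_k}$. The complex $\mathcal{FK}_\bullet(y_1,\ldots,y_n;A)$ ($=A\otimes_S\mathcal{FK}_\bullet(x_1,\dots,x_n)$) is: for $0\le l\le n+1$, $\mathcal{FK}_l$ is the free left $A[\Theta;\Phi]$-module with basis $\{\mathbf{e}_I:|I|=l\}\cup\{\mathbf{e}_J\wedge u:|J|=l-1\}$, and $\partial_l:\mathcal{FK}_l\to\mathcal{FK}_{l-1}$ is the left $A[\Theta;\Phi]$-linear map with $\partial_l(\mathbf{e}_I)=\sum_{r=1}^l(-1)^{r-1}y_{i_r}\mathbf{e}_{I\setminus\{i_r\}}$ for $I=\{i_1<\dots<i_l\}$ and $\partial_l(\mathbf{e}_J\wedge u)=(-1)^{l-1}(\Theta-t_J)\mathbf{e}_J+\sum_{r=1}^{l-1}(-1)^{r-1}\Phi(y_{j_r})\mathbf{e}_{J\setminus\{j_r\}}\wedge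 u$ for $J=\{j_1<\dots<j_{l-1}\}$. $A/I_n$ is a left $A[\Theta;\Phi]$-module with $\Theta$ acting by the map induced by $\Phi$ (well defined since $\Phi(I_n)\subseteq I_n$). *)

theory Defs
  imports "HOL-Computational_Algebra.Polynomial" "HOL-Library.Poly_Mapping"
begin

definition is_ideal :: "'a::comm_ring_1 set \<Rightarrow> bool" where
  "is_ideal I \<longleftrightarrow> 0 \<in> I \<and> (\<forall>a\<in>I. \<forall>b\<in>I. a + b \<in> I) \<and> (\<forall>r. \<forall>a\<in>I. r * a \<in> I)"

definition noetherian_ring :: "'a::comm_ring_1 itself \<Rightarrow> bool" where
  "noetherian_ring _ \<longleftrightarrow> (\<forall>I::'a set. is_ideal I \<longrightarrow>
     (\<exists>F. finite F \<and> F \<subseteq> I \<and> I = {\<Sum>f\<in>F. c f * f | c. True}))"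

definition is_subring :: "'a::comm_ring_1 set \<Rightarrow> bool" where
  "is_subring K \<longleftrightarrow> 0 \<in> K \<and> 1 \<in> K \<and> (\<forall>a\<in>K. \<forall>b\<in>K. a + b \<in> K \<and> a - b \<in> K \<and> a * b \<in> K)"

definition ring_hom_on :: "'r::comm_ring_1 set \<Rightarrow> ('r \<Rightarrow> 'm::comm_ring_1) \<Rightarrow> bool" where
  "ring_hom_on R f \<longleftrightarrow> f 1 = 1 \<and>
     (\<forall>a\<in>R. \<forall>b\<in>R. f (a + b) = f a + f b \<and> f (a * b) = f a * f b)"

text \<open>Flatness of a ring homomorphism f : R \<rightarrow> M (M regarded as an R-module via f),
  expressed by the equational criterion of flatness.\<close>
definition flat_hom :: "'r::comm_ring_1 set \<Rightarrow> 'm::comm_ring_1 set \<Rightarrow> ('r \<Rightarrow> 'm) \<Rightarrow> bool" where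
  "flat_hom R M f \<longleftrightarrow>
     (\<forall>(k::nat) (r::nat \<Rightarrow> 'r) (x::nat \<Rightarrow> 'm).
        (\<forall>i<k. r i \<in> R \<and> x i \<in> M) \<and> (\<Sum>i<k. f (r i) * x i) = 0 \<longrightarrow>
        (\<exists>(q::nat) (a::nat \<Rightarrow> nat \<Rightarrow> 'r) (z::nat \<Rightarrow> 'm).
            (\<forall>j<q. z j \<in> M) \<and> (\<forall>i<k. \<forall>j<q. a i j \<in> R) \<and>
            (\<forall>i<k. x i = (\<Sum>j<q. f (a i j) * z j)) \<and>
            (\<forall>j<q. (\<Sum>i<k. r i * a i j) = 0)))"

definition gen_ideal :: "nat \<Rightarrow> (nat \<Rightarrow> 'a::comm_ring_1) \<Rightarrow> 'a set" where
  "gen_ideal n y = {\<Sum>i\<in>{1..n}. a i * y i | a. True}"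

type_synonym 'a mpoly = "(nat \<Rightarrow>\<^sub>0 nat) \<Rightarrow>\<^sub>0 'a"

definition mp_var :: "nat \<Rightarrow> 'a::comm_ring_1 mpoly" where
  "mp_var i = Poly_Mapping.single (Poly_Mapping.single i 1) 1"

definition mp_const :: "'a::comm_ring_1 \<Rightarrow> 'a mpoly" where
  "mp_const c = Poly_Mapping.single 0 c"

definition poly_ring :: "'a::comm_ring_1 set \<Rightarrow> nat \<Rightarrow> 'a mpoly set" where
  "poly_ring K n = {p. (\<forall>m. Poly_Mapping.lookup p m \<in> K) \<and> (\<forall>m\<in>Poly_Mapping.keys p. Poly_Mapping.keys m \<subseteq> {1..n})}"

text \<open>K_l = free A-module with basis e_I, I \<subseteq> {1..n}, |I| = l; elements are coefficient
  functions on subsets.\<close>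
definition kz_mod :: "nat \<Rightarrow> nat \<Rightarrow> (nat set \<Rightarrow> 'a::comm_ring_1) set" where
  "kz_mod n l = {m. \<forall>I. m I \<noteq> 0 \<longrightarrow> I \<subseteq> {1..n} \<and> card I = l}"

text \<open>d(e_I) = \<Sum>_r (-1)^(r-1) y_{i_r} e_{I - i_r}; written via the coefficient of e_K.\<close>
definition kz_d :: "nat \<Rightarrow> (nat \<Rightarrow> 'a::comm_ring_1) \<Rightarrow> (nat set \<Rightarrow> 'a) \<Rightarrow> (nat set \<Rightarrow> 'a)" where
  "kz_d n y m = (\<lambda>K. \<Sum>i\<in>{1..n} - K. (- 1) ^ card {j\<in>K. j < i} * y i * m (insert i K))"

definition koszul_regular :: "nat \<Rightarrow> (nat \<Rightarrow> 'a::comm_ring_1) \<Rightarrow> bool" where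
  "koszul_regular n y \<longleftrightarrow> (\<forall>l\<ge>1. \<forall>m\<in>kz_mod n l. kz_d n y m = (\<lambda>_. 0) \<longrightarrow>
      (\<exists>m'\<in>kz_mod n (Suc l). kz_d n y m' = m))"

text \<open>Elements \<Sum> a_i \<Theta>^i are represented by 'a poly (left coefficients);
  multiplication (a \<Theta>^i)(b \<Theta>^j) = a \<Phi>^i(b) \<Theta>^(i+j).\<close>
definition skmult :: "('a::comm_ring_1 \<Rightarrow> 'a) \<Rightarrow> 'a poly \<Rightarrow> 'a poly \<Rightarrow> 'a poly" where
  "skmult \<Phi> p q = (\<Sum>i\<le>degree p. monom (coeff p i) i * map_poly (\<Phi> ^^ i) q)"

text \<open>Action of A[\<Theta>;\<Phi>] on A (hence on A/I_n): \<Theta> acts by \<Phi>.\<close>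
definition skact :: "('a::comm_ring_1 \<Rightarrow> 'a) \<Rightarrow> 'a poly \<Rightarrow> 'a \<Rightarrow> 'a" where
  "skact \<Phi> c a = (\<Sum>i\<le>degree c. coeff c i * (\<Phi> ^^ i) a)"

text \<open>Basis of FK_l: (I, False) stands for e_I with |I| = l, (J, True) stands for
  e_J \<and> u with |J| = l - 1.  Elements are coefficient functions into A[\<Theta>;\<Phi>].\<close>
definition fk_mod :: "nat \<Rightarrow> nat \<Rightarrow> (nat set \<times> bool \<Rightarrow> 'a::comm_ring_1 poly) set" where
  "fk_mod n l = {m. \<forall>I b. m (I, b) \<noteq> 0 \<longrightarrow> I \<subseteq> {1..n} \<and> card I + (if b then 1 else 0) = l}"

text \<open>The left-linear differential, given by the coefficient of each target basis
  element: coefficient of b' in \<partial>(\<Sum>_b c_b b) is \<Sum>_b c_b * (coefficient of b' in \<partial> b).\<close>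
definition fk_d :: "nat \<Rightarrow> ('a::comm_ring_1 \<Rightarrow> 'a) \<Rightarrow> (nat \<Rightarrow> 'a) \<Rightarrow> (nat \<Rightarrow> 'a)
    \<Rightarrow> (nat set \<times> bool \<Rightarrow> 'a poly) \<Rightarrow> (nat set \<times> bool \<Rightarrow> 'a poly)" where
  "fk_d n \<Phi> y t m = (\<lambda>(K, b).
     if b then
       (\<Sum>j\<in>{1..n} - K. skmult \<Phi> (m (insert j K, True))
                           [: (- 1) ^ card {i\<in>K. i < j} * \<Phi> (y j) :])
     else
       (\<Sum>i\<in>{1..n} - K. skmult \<Phi> (m (insert i K, False))
                           [: (- 1) ^ card {j\<in>K. j < i} * y i :])
       + skmult \<Phi> (m (K, True)) (smult ((- 1) ^ card K) [: - (\<Prod>j\<in>K. t j), 1 :]))"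

text \<open>Augmentation FK_0 = A[\<Theta>;\<Phi>] e_\<emptyset> \<rightarrow> A/I_n, c e_\<emptyset> \<mapsto> c \<cdot> [1] = [\<Sum> c_i];
  we record a representative in A.\<close>
definition fk_aug :: "(nat set \<times> bool \<Rightarrow> 'a::comm_ring_1 poly) \<Rightarrow> 'a" where
  "fk_aug m = poly (m ({}, False)) 1"

end

theory Submission
  imports Defs
begin

text \<open>Taking the coefficient of \<open>\<Theta>\<^sup>k\<close>, the differential of \<open>\<F>\<K>\<close> is on the \<open>e\<^sub>I\<close>-components the Koszul
  differential of the sequence \<open>\<Phi>\<^sup>k(y)\<close>, on the \<open>e\<^sub>J \<and> u\<close>-components that of \<open>\<Phi>\<^bsup>k+1\<^esup>(y)\<close>, and
  the two are coupled by \<open>\<Theta> - t\<^sub>J\<close>. Since \<open>\<Phi>(y\<^sub>i) = t\<^sub>i y\<^sub>i\<close>, the coupling anticommutes with the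
  Koszul differentials, whence \<open>\<partial>\<partial> = 0\<close>. By the equational criterion, flatness of \<open>\<Phi>\<close> carries
  Koszul regularity from \<open>y\<close> to every \<open>\<Phi>\<^sup>k(y)\<close>. A cycle of positive degree is then lifted in
  two steps: its \<open>u\<close>-part is coefficientwise a Koszul boundary (in degree one because its
  coefficients lie in the ideals of the \<open>\<Phi>\<^bsup>k+1\<^esup>(y)\<close>), and the remaining cycle has no \<open>u\<close>-part and
  is lifted coefficientwise as well. In degree zero, \<open>\<partial>\<^sub>1\<close> reaches every element of \<open>I\<^sub>n\<close> because
  \<open>p(\<Theta>) - p(1)\<close> is divisible by \<open>\<Theta> - 1\<close>.\<close>

section \<open>Ring endomorphisms and the skew polynomial ring\<close>

lemma ring_hom_on_UNIV_funpow:
  fixes f :: "'a::comm_ring_1 \<Rightarrow> 'a"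
  assumes "ring_hom_on UNIV f"
  shows "ring_hom_on UNIV (f ^^ k)"
  using assms by (induction k) (auto simp: ring_hom_on_def)

lemma poly_one_eq_sum_coeff:
  fixes p :: "'a::comm_ring_1 poly"
  assumes "degree p \<le> N"
  shows "poly p 1 = (\<Sum>i\<le>N. coeff p i)"
  unfolding poly_altdef using assms
  by (simp, intro sum.mono_neutral_left) (auto simp: coeff_eq_0)

locale ring_hom_univ =
  fixes f :: "'a::comm_ring_1 \<Rightarrow> 'b::comm_ring_1"
  assumes ring_hom: "ring_hom_on UNIV f"
begin

lemma hom_one [simp]: "f 1 = 1"
  and hom_add: "f (a + b) = f a + f b"
  and hom_mult: "f (a * b) = f a * f b"
  using ring_hom by (simp_all add: ring_hom_on_def)

lemma hom_zero [simp]: "f 0 = 0"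
  using hom_add[of 0 0] by simp

lemma hom_minus: "f (- a) = - f a"
  using hom_add[of a "- a"] by (simp add: add_eq_0_iff2)

lemma hom_sum: "f (sum g A) = (\<Sum>x\<in>A. f (g x))"
  by (induction A rule: infinite_finite_induct) (auto simp: hom_add)

lemma hom_minus_one_power: "f ((- 1) ^ k) = (- 1) ^ k"
  by (induction k) (simp_all add: hom_mult hom_minus)

lemma coeff_map_poly_hom: "coeff (map_poly f p) n = f (coeff p n)"
  by (rule coeff_map_poly) simp

lemma poly_map_poly_one: "poly (map_poly f p) 1 = f (poly p 1)"
  using poly_one_eq_sum_coeff[OF map_poly_degree_leq, of f p] poly_one_eq_sum_coeff[of p "degree p"]
  by (simp add: coeff_map_poly_hom hom_sum)

end

locale ring_endo = ring_hom_univ \<Phi> for \<Phi> :: "'a::comm_ring_1 \<Rightarrow> 'a"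
begin

sublocale iter: ring_hom_univ "\<Phi> ^^ k" for k
  by unfold_locales (rule ring_hom_on_UNIV_funpow[OF ring_hom])

lemma coeff_skmult:
  "coeff (skmult \<Phi> p q) k = (\<Sum>i\<le>k. coeff p i * (\<Phi> ^^ i) (coeff q (k - i)))"
proof -
  have "coeff (skmult \<Phi> p q) k
      = (\<Sum>i\<le>degree p. if k < i then 0 else coeff p i * (\<Phi> ^^ i) (coeff q (k - i)))"
    by (simp add: skmult_def coeff_sum coeff_monom_mult iter.coeff_map_poly_hom cong: if_cong)
  also have "\<dots> = (\<Sum>i\<le>max k (degree p). if k < i then 0 else coeff p i * (\<Phi> ^^ i) (coeff q (k - i)))"
    by (rule sum.mono_neutral_left) (auto simp: coeff_eq_0)
  also have "\<dots> = (\<Sum>i\<le>k. if k < i then 0 else coeff p i * (\<Phi> ^^ i) (coeff q (k - i)))"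
    by (rule sum.mono_neutral_right) (auto simp: coeff_eq_0)
  finally show ?thesis by simp
qed

lemma coeff_skmult_const: "coeff (skmult \<Phi> p [:a:]) k = coeff p k * (\<Phi> ^^ k) a"
proof -
  have "coeff (skmult \<Phi> p [:a:]) k = (\<Sum>i\<le>k. if i = k then coeff p i * (\<Phi> ^^ i) a else 0)"
    unfolding coeff_skmult by (rule sum.cong) (auto simp: coeff_pCons split: nat.split)
  thus ?thesis by simp
qed

lemma coeff_skmult_linear:
  "coeff (skmult \<Phi> p [:a, b:]) k
     = coeff p k * (\<Phi> ^^ k) a + (if k = 0 then 0 else coeff p (k - 1) * (\<Phi> ^^ (k - 1)) b)"
proof -
  have "coeff (skmult \<Phi> p [:a, b:]) k = (\<Sum>i\<le>k. (if i = k then coeff p i * (\<Phi> ^^ i) a else 0)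
      + (if Suc i = k then coeff p i * (\<Phi> ^^ i) b else 0))"
    unfolding coeff_skmult by (rule sum.cong) (auto simp: coeff_pCons split: nat.split)
  also have "\<dots> = coeff p k * (\<Phi> ^^ k) a + (\<Sum>i\<le>k. if Suc i = k then coeff p i * (\<Phi> ^^ i) b else 0)"
    by (simp add: sum.distrib)
  also have "(\<Sum>i\<le>k. if Suc i = k then coeff p i * (\<Phi> ^^ i) b else 0)
      = (if k = 0 then 0 else coeff p (k - 1) * (\<Phi> ^^ (k - 1)) b)"
    by (cases k) (auto intro: sum.neutral)
  finally show ?thesis .
qed

lemma skmult_const_const: "skmult \<Phi> [:r:] [:a:] = [:r * a:]"
  by (rule poly_eqI) (simp add: coeff_skmult_const coeff_pCons split: nat.split)

lemma skmult_X_minus_one: "skmult \<Phi> p [:- 1, 1:] = [:- 1, 1:] * p"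
  by (rule poly_eqI) (simp add: coeff_skmult_linear coeff_pCons iter.hom_minus split: nat.split)

lemma poly_skmult_one: "poly (skmult \<Phi> p q) 1 = skact \<Phi> p (poly q 1)"
  by (simp add: skmult_def skact_def poly_sum poly_monom iter.poly_map_poly_one)

lemma skact_zero [simp]: "skact \<Phi> p 0 = 0"
  by (simp add: skact_def)

end

section \<open>The Koszul complex\<close>

lemma gen_ideal_iff: "x \<in> gen_ideal n y \<longleftrightarrow> (\<exists>c. x = (\<Sum>i\<in>{1..n}. c i * y i))"
  unfolding gen_ideal_def by blast

lemma gen_ideal_0 [simp]: "0 \<in> gen_ideal n y"
  unfolding gen_ideal_iff by (auto intro: exI[of _ "\<lambda>_. 0"])

lemma gen_ideal_add:
  assumes "a \<in> gen_ideal n y" "b \<in> gen_ideal n y"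
  shows "a + b \<in> gen_ideal n y"
proof -
  obtain c d where "a = (\<Sum>i\<in>{1..n}. c i * y i)" "b = (\<Sum>i\<in>{1..n}. d i * y i)"
    using assms unfolding gen_ideal_iff by blast
  hence "a + b = (\<Sum>i\<in>{1..n}. (c i + d i) * y i)" by (simp add: sum.distrib distrib_right)
  thus ?thesis unfolding gen_ideal_iff by (rule exI[of _ "\<lambda>i. c i + d i"])
qed

lemma gen_ideal_diff:
  assumes "a \<in> gen_ideal n y" "b \<in> gen_ideal n y"
  shows "a - b \<in> gen_ideal n y"
proof -
  obtain c d where "a = (\<Sum>i\<in>{1..n}. c i * y i)" "b = (\<Sum>i\<in>{1..n}. d i * y i)"
    using assms unfolding gen_ideal_iff by blast
  hence "a - b = (\<Sum>i\<in>{1..n}. (c i - d i) * y i)" by (simp add: sum_subtractf left_diff_distrib)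
  thus ?thesis unfolding gen_ideal_iff by (rule exI[of _ "\<lambda>i. c i - d i"])
qed

lemma gen_ideal_mult:
  assumes "a \<in> gen_ideal n y"
  shows "r * a \<in> gen_ideal n y"
proof -
  obtain c where "a = (\<Sum>i\<in>{1..n}. c i * y i)" using assms unfolding gen_ideal_iff by blast
  hence "r * a = (\<Sum>i\<in>{1..n}. (r * c i) * y i)" by (simp add: sum_distrib_left mult.assoc)
  thus ?thesis unfolding gen_ideal_iff by (rule exI[of _ "\<lambda>i. r * c i"])
qed

lemma gen_ideal_sum: "(\<And>x. x \<in> A \<Longrightarrow> f x \<in> gen_ideal n y) \<Longrightarrow> sum f A \<in> gen_ideal n y"
  by (induction A rule: infinite_finite_induct) (auto simp: gen_ideal_add)

lemma gen_ideal_generator: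
  assumes "i \<in> {1..n}"
  shows "y i \<in> gen_ideal n y"
proof -
  have "(\<Sum>j\<in>{1..n}. (if j = i then 1 else 0) * y j) = (\<Sum>j\<in>{1..n}. if j = i then y j else 0)"
    by (rule sum.cong) auto
  thus ?thesis using assms unfolding gen_ideal_iff by (auto intro: exI[of _ "\<lambda>j. if j = i then 1 else 0"])
qed

lemma card_less_insert:
  assumes "i \<notin> K"
  shows "card {x\<in>insert i K. x < (j::nat)} = card {x\<in>K. x < j} + (if i < j then 1 else 0)"
proof -
  have "finite {x\<in>K. x < j}" by (rule finite_subset[of _ "{..<j}"]) auto
  moreover have "{x\<in>insert i K. x < j} = (if i < j then insert i {x\<in>K. x < j} else {x\<in>K. x < j})"
    by auto
  ultimately show ?thesis using assms by simp
qed

lemma sum_off_diagonal_antisym: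
  fixes F :: "nat \<Rightarrow> nat \<Rightarrow> 'a::comm_ring_1"
  assumes "finite A" and antisym: "\<And>i j. i \<in> A \<Longrightarrow> j \<in> A \<Longrightarrow> i \<noteq> j \<Longrightarrow> F i j = - F j i"
  shows "(\<Sum>i\<in>A. \<Sum>j\<in>A-{i}. F i j) = 0"
proof -
  let ?below = "\<lambda>i. \<Sum>j\<in>A. if j < i then F i j else 0"
  let ?above = "\<lambda>i. \<Sum>j\<in>A. if i < j then F i j else 0"
  have below_above: "(\<Sum>j\<in>A-{i}. F i j) = ?below i + ?above i" if "i \<in> A" for i
  proof -
    have "(\<Sum>j\<in>A-{i}. F i j) = (\<Sum>j\<in>A. if j = i then 0 else F i j)"
      using assms(1) that by (simp add: sum.If_cases Diff_eq Int_commute)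
    also have "\<dots> = (\<Sum>j\<in>A. (if j < i then F i j else 0) + (if i < j then F i j else 0))"
      by (rule sum.cong) auto
    finally show ?thesis by (simp add: sum.distrib)
  qed
  have "(\<Sum>i\<in>A. ?above i) = (\<Sum>j\<in>A. \<Sum>i\<in>A. if i < j then F i j else 0)"
    by (rule sum.swap)
  also have "\<dots> = (\<Sum>i\<in>A. \<Sum>j\<in>A. - (if j < i then F i j else 0))"
  proof (intro sum.cong refl)
    fix i j assume "i \<in> A" "j \<in> A"
    thus "(if j < i then F j i else 0) = - (if j < i then F i j else 0)"
      using antisym[of j i] by auto
  qed
  finally have "(\<Sum>i\<in>A. ?above i) = - (\<Sum>i\<in>A. ?below i)"
    by (simp add: sum_negf)
  thus ?thesis by (simp add: below_above sum.distrib)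
qed

lemma kz_d_kz_d: "kz_d n y (kz_d n y m) = (\<lambda>_. 0)"
proof
  fix K
  define A where "A = {1..n} - K"
  define F where "F i j = ((- 1) ^ card {x\<in>K. x < i} * y i)
    * ((- 1) ^ card {x\<in>insert i K. x < j} * y j * m (insert j (insert i K)))" for i j
  have "kz_d n y (kz_d n y m) K = (\<Sum>i\<in>A. \<Sum>j\<in>A-{i}. F i j)"
    unfolding kz_d_def A_def[symmetric]
  proof (rule sum.cong[OF refl])
    fix i assume "i \<in> A"
    hence "{1..n} - insert i K = A - {i}" by (auto simp: A_def)
    thus "(- 1) ^ card {j\<in>K. j < i} * y i * (\<Sum>j\<in>{1..n} - insert i K.
        (- 1) ^ card {x\<in>insert i K. x < j} * y j * m (insert j (insert i K))) = sum (F i) (A - {i})"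
      unfolding F_def sum_distrib_left by (simp only: mult.assoc)
  qed
  also have "\<dots> = 0"
  proof (rule sum_off_diagonal_antisym)
    show "finite A" by (simp add: A_def)
    fix i j assume "i \<in> A" "j \<in> A" "i \<noteq> j"
    hence "i \<notin> K" "j \<notin> K" by (auto simp: A_def)
    moreover have "insert j (insert i K) = insert i (insert j K)" by auto
    ultimately show "F i j = - F j i"
      using \<open>i \<noteq> j\<close>
      unfolding F_def card_less_insert[OF \<open>i \<notin> K\<close>] card_less_insert[OF \<open>j \<notin> K\<close>]
      by (cases "i < j") (simp_all add: mult_ac)
  qed
  finally show "kz_d n y (kz_d n y m) K = 0" .
qed

lemma kz_d_add: "kz_d n y (\<lambda>I. g I + h I) K = kz_d n y g K + kz_d n y h K"
  by (simp add: kz_d_def algebra_simps sum.distrib)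

lemma kz_d_diff: "kz_d n y (\<lambda>I. g I - h I) K = kz_d n y g K - kz_d n y h K"
  by (simp add: kz_d_def algebra_simps sum_subtractf)

lemma kz_d_zero [simp]: "kz_d n y (\<lambda>_. 0) = (\<lambda>_. 0)"
  by (simp add: kz_d_def)

lemma zero_in_kz_mod [simp]: "(\<lambda>_. 0) \<in> kz_mod n l"
  by (simp add: kz_mod_def)

lemma kz_d_mod:
  assumes "m \<in> kz_mod n l"
  shows "kz_d n y m \<in> kz_mod n (l - 1)"
  unfolding kz_mod_def
proof (intro CollectI allI impI)
  fix K assume "kz_d n y m K \<noteq> 0"
  then obtain i where i: "i \<in> {1..n} - K" "(- 1) ^ card {j\<in>K. j < i} * y i * m (insert i K) \<noteq> 0"
    unfolding kz_d_def by (rule sum.not_neutral_contains_not_neutral)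
  hence "m (insert i K) \<noteq> 0" by auto
  hence "insert i K \<subseteq> {1..n}" "card (insert i K) = l"
    using assms unfolding kz_mod_def by blast+
  moreover have "finite K" using \<open>insert i K \<subseteq> {1..n}\<close> finite_subset by auto
  ultimately show "K \<subseteq> {1..n} \<and> card K = l - 1" using i(1) by simp
qed

lemma kz_d_empty_in_gen_ideal: "kz_d n y m {} \<in> gen_ideal n y"
  unfolding gen_ideal_iff kz_d_def by (auto simp: mult.commute)

lemma kz_d_onto_gen_ideal:
  assumes "a \<in> gen_ideal n y"
  shows "\<exists>g\<in>kz_mod n 1. kz_d n y g = (\<lambda>K. if K = {} then a else 0)"
proof -
  obtain c where c: "a = (\<Sum>i\<in>{1..n}. c i * y i)" using assms unfolding gen_ideal_iff by blast
  define g where "g I = (if \<exists>i\<in>{1..n}. I = {i} then c (the_elem I) else 0)" for I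
  have "g \<in> kz_mod n 1" by (auto simp: g_def kz_mod_def)
  moreover have "kz_d n y g K = (if K = {} then a else 0)" for K
  proof (cases "K = {}")
    case True
    have "kz_d n y g {} = (\<Sum>i\<in>{1..n}. c i * y i)"
      unfolding kz_d_def g_def by (intro sum.cong) auto
    thus ?thesis using True c by simp
  next
    case False
    hence "g (insert i K) = 0" if "i \<notin> K" for i
      using that by (auto simp: g_def)
    thus ?thesis using False by (simp add: kz_d_def)
  qed
  ultimately show ?thesis by blast
qed

text \<open>The entry \<open>(K, I)\<close> is the coefficient of \<open>e\<^sub>K\<close> in the Koszul differential of \<open>e\<^sub>I\<close>.\<close>

definition kz_matrix :: "nat \<Rightarrow> (nat \<Rightarrow> 'a::comm_ring_1) \<Rightarrow> nat set \<Rightarrow> nat set \<Rightarrow> 'a" where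
  "kz_matrix n y K I =
     (\<Sum>i\<in>{1..n} - K. if I = insert i K then (- 1) ^ card {j\<in>K. j < i} * y i else 0)"

lemma kz_d_eq_kz_matrix_sum:
  assumes K: "K \<subseteq> {1..n}" "card K = l - 1" and l: "1 \<le> l"
  shows "kz_d n y m K = (\<Sum>I\<in>{I. I \<subseteq> {1..n} \<and> card I = l}. kz_matrix n y K I * m I)"
proof -
  let ?U = "{I. I \<subseteq> {1..n} \<and> card I = l}"
  let ?s = "\<lambda>i. (- 1) ^ card {j\<in>K. j < i} * y i"
  have "finite ?U" by (rule finite_subset[of _ "Pow {1..n}"]) auto
  have "finite K" using K(1) finite_subset by blast
  have "(\<Sum>I\<in>?U. kz_matrix n y K I * m I)
      = (\<Sum>I\<in>?U. \<Sum>i\<in>{1..n} - K. if I = insert i K then ?s i * m I else 0)"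
    unfolding kz_matrix_def sum_distrib_right by (intro sum.cong refl) simp
  also have "\<dots> = (\<Sum>i\<in>{1..n} - K. \<Sum>I\<in>?U. if I = insert i K then ?s i * m I else 0)"
    by (rule sum.swap)
  also have "\<dots> = (\<Sum>i\<in>{1..n} - K. ?s i * m (insert i K))"
  proof (rule sum.cong[OF refl])
    fix i assume "i \<in> {1..n} - K"
    hence "insert i K \<in> ?U" using K l \<open>finite K\<close> by auto
    thus "(\<Sum>I\<in>?U. if I = insert i K then ?s i * m I else 0) = ?s i * m (insert i K)"
      using \<open>finite ?U\<close> by simp
  qed
  finally show ?thesis by (simp add: kz_d_def)
qed

section \<open>Flatness and Koszul regularity\<close>

lemma flat_hom_finite_sum:
  fixes f :: "'r::comm_ring_1 \<Rightarrow> 'm::comm_ring_1" and U :: "'u set"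
  assumes flat: "flat_hom UNIV UNIV f" and "finite U" and "(\<Sum>u\<in>U. f (r u) * x u) = 0"
  shows "\<exists>(q::nat) a z. (\<forall>u\<in>U. x u = (\<Sum>j<q. f (a u j) * z j)) \<and> (\<forall>j<q. (\<Sum>u\<in>U. r u * a u j) = 0)"
proof -
  obtain g where g: "bij_betw g {..<card U} U"
    using ex_bij_betw_nat_finite[OF \<open>finite U\<close>] by (auto simp: atLeast0LessThan)
  have "(\<Sum>i<card U. f (r (g i)) * x (g i)) = 0"
    using assms(3) sum.reindex_bij_betw[OF g, of "\<lambda>u. f (r u) * x u"] by simp
  hence "\<exists>(q::nat) a z. (\<forall>j<q. z j \<in> UNIV) \<and> (\<forall>i<card U. \<forall>j<q. a i j \<in> UNIV) \<and>
      (\<forall>i<card U. x (g i) = (\<Sum>j<q. f (a i j) * z j)) \<and> (\<forall>j<q. (\<Sum>i<card U. r (g i) * a i j) = 0)"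
    by (intro flat[unfolded flat_hom_def, rule_format, of "card U" "\<lambda>i. r (g i)" "\<lambda>i. x (g i)"]) auto
  then obtain q :: nat and a z where x: "\<forall>i<card U. x (g i) = (\<Sum>j<q. f (a i j) * z j)"
      and rel: "\<forall>j<q. (\<Sum>i<card U. r (g i) * a i j) = 0"
    by blast
  define h where "h = inv_into {..<card U} g"
  have h: "h u < card U" "g (h u) = u" if "u \<in> U" for u
    using that g bij_betw_inv_into_right[OF g] bij_betw_apply[OF bij_betw_inv_into[OF g]]
    unfolding h_def by auto
  have hg: "h (g i) = i" if "i < card U" for i
    using that g unfolding h_def by (simp add: bij_betw_inv_into_left)
  show ?thesis
  proof (intro exI conjI ballI allI impI)
    fix u assume "u \<in> U"
    thus "x u = (\<Sum>j<q. f (a (h u) j) * z j)" using x h by metis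
  next
    fix j assume "j < q"
    have "(\<Sum>u\<in>U. r u * a (h u) j) = (\<Sum>i<card U. r (g i) * a (h (g i)) j)"
      using sum.reindex_bij_betw[OF g, of "\<lambda>u. r u * a (h u) j"] by simp
    also have "\<dots> = (\<Sum>i<card U. r (g i) * a i j)" by (rule sum.cong) (auto simp: hg)
    finally show "(\<Sum>u\<in>U. r u * a (h u) j) = 0" using rel \<open>j < q\<close> by simp
  qed
qed

context ring_hom_univ
begin

text \<open>A solution \<open>x = a z\<close> of the first relations turns the next one into a relation for \<open>z\<close>,
  which is solved again and composed.\<close>

lemma flat_hom_finite_system:
  assumes flat: "flat_hom UNIV UNIV f" and "finite U" and "finite E"
    and "\<forall>e\<in>E. (\<Sum>u\<in>U. f (r e u) * x u) = 0"
  shows "\<exists>(q::nat) a z. (\<forall>u\<in>U. x u = (\<Sum>j<q. f (a u j) * z j))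
           \<and> (\<forall>e\<in>E. \<forall>j<q. (\<Sum>u\<in>U. r e u * a u j) = 0)"
  using \<open>finite E\<close> assms(4)
proof (induction E rule: finite_induct)
  case empty
  have "(\<Sum>u\<in>U. f 0 * x u) = 0" by simp
  from flat_hom_finite_sum[OF flat \<open>finite U\<close> this] show ?case by auto
next
  case (insert e E)
  then obtain q :: nat and a z where x: "\<forall>u\<in>U. x u = (\<Sum>j<q. f (a u j) * z j)"
      and rel: "\<forall>e\<in>E. \<forall>j<q. (\<Sum>u\<in>U. r e u * a u j) = 0"
    by auto
  define r' where "r' j = (\<Sum>u\<in>U. r e u * a u j)" for j
  have "(\<Sum>j\<in>{..<q}. f (r' j) * z j) = (\<Sum>u\<in>U. f (r e u) * (\<Sum>j<q. f (a u j) * z j))"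
    unfolding r'_def
    by (simp add: hom_sum hom_add hom_mult sum_distrib_left sum_distrib_right mult.assoc) (rule sum.swap)
  also have "\<dots> = (\<Sum>u\<in>U. f (r e u) * x u)" using x by simp
  also have "\<dots> = 0" using insert.prems by simp
  finally obtain q' :: nat and b w where z: "\<forall>j\<in>{..<q}. z j = (\<Sum>h<q'. f (b j h) * w h)"
      and rel': "\<forall>h<q'. (\<Sum>j\<in>{..<q}. r' j * b j h) = 0"
    using flat_hom_finite_sum[OF flat, of "{..<q}" r' z] by auto
  define a' where "a' u h = (\<Sum>j<q. a u j * b j h)" for u h
  show ?case
  proof (intro exI[of _ q'] exI[of _ a'] exI[of _ w] conjI ballI allI impI)
    fix u assume "u \<in> U"
    hence "x u = (\<Sum>j<q. f (a u j) * (\<Sum>h<q'. f (b j h) * w h))" using x z by simp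
    also have "\<dots> = (\<Sum>h<q'. f (a' u h) * w h)"
      unfolding a'_def by (simp add: hom_sum hom_mult sum_distrib_left sum_distrib_right mult.assoc) (rule sum.swap)
    finally show "x u = (\<Sum>h<q'. f (a' u h) * w h)" .
  next
    fix e' h assume e': "e' \<in> insert e E" and "h < q'"
    have "(\<Sum>u\<in>U. r e' u * a' u h) = (\<Sum>j<q. (\<Sum>u\<in>U. r e' u * a u j) * b j h)"
      unfolding a'_def by (simp add: sum_distrib_left sum_distrib_right mult.assoc) (rule sum.swap)
    also have "\<dots> = 0"
      using e' rel rel' \<open>h < q'\<close> by (cases "e' = e") (simp_all add: r'_def)
    finally show "(\<Sum>u\<in>U. r e' u * a' u h) = 0" .
  qed
qed

lemma kz_matrix_map: "f (kz_matrix n y K I) = kz_matrix n (\<lambda>i. f (y i)) K I"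
  unfolding kz_matrix_def hom_sum by (intro sum.cong refl) (simp add: hom_mult hom_minus_one_power)

lemma kz_d_map_combination:
  "kz_d n (\<lambda>i. f (y i)) (\<lambda>J. \<Sum>j<q. f (b j J) * z j) K = (\<Sum>j<q. f (kz_d n y (b j) K) * z j)"
  unfolding kz_d_def
  by (simp add: hom_sum hom_mult hom_minus_one_power sum_distrib_left sum_distrib_right mult.assoc)
    (rule sum.swap)

lemma kz_mod_map_combination:
  assumes "\<forall>j<q. b j \<in> kz_mod n l"
  shows "(\<lambda>J. \<Sum>j<q. f (b j J) * z j) \<in> kz_mod n l"
  unfolding kz_mod_def
proof (intro CollectI allI impI)
  fix J assume "(\<Sum>j<q. f (b j J) * z j) \<noteq> 0"
  then obtain j where "j < q" "b j J \<noteq> 0"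
    by (force elim: sum.not_neutral_contains_not_neutral)
  thus "J \<subseteq> {1..n} \<and> card J = l" using assms unfolding kz_mod_def by blast
qed

lemma kz_cycle_map_eq_combination:
  assumes flat: "flat_hom UNIV UNIV f" and l: "1 \<le> l" and m: "m \<in> kz_mod n l"
    and cycle: "kz_d n (\<lambda>i. f (y i)) m = (\<lambda>_. 0)"
  shows "\<exists>(q::nat) c z. (\<forall>j<q. c j \<in> kz_mod n l \<and> kz_d n y (c j) = (\<lambda>_. 0))
           \<and> m = (\<lambda>I. \<Sum>j<q. f (c j I) * z j)"
proof -
  define U where "U = {I. I \<subseteq> {1..n} \<and> card I = l}"
  define E where "E = {K. K \<subseteq> {1..n} \<and> card K = l - 1}"
  have "finite U" "finite E"
    unfolding U_def E_def by (rule finite_subset[of _ "Pow {1..n}"]; auto)+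
  have "\<forall>K\<in>E. (\<Sum>I\<in>U. f (kz_matrix n y K I) * m I) = 0"
  proof
    fix K assume "K \<in> E"
    hence "kz_d n (\<lambda>i. f (y i)) m K = (\<Sum>I\<in>U. kz_matrix n (\<lambda>i. f (y i)) K I * m I)"
      using l unfolding E_def U_def by (intro kz_d_eq_kz_matrix_sum) auto
    thus "(\<Sum>I\<in>U. f (kz_matrix n y K I) * m I) = 0" using cycle by (simp add: kz_matrix_map)
  qed
  then obtain q :: nat and a z where m_eq: "\<forall>I\<in>U. m I = (\<Sum>j<q. f (a I j) * z j)"
      and rel: "\<forall>K\<in>E. \<forall>j<q. (\<Sum>I\<in>U. kz_matrix n y K I * a I j) = 0"
    using flat_hom_finite_system[OF flat \<open>finite U\<close> \<open>finite E\<close>] by blast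
  define c where "c j I = (if I \<in> U then a I j else 0)" for j I
  have c_mod: "c j \<in> kz_mod n l" for j
    unfolding c_def kz_mod_def U_def by auto
  have "kz_d n y (c j) K = 0" if "j < q" for j K
  proof (cases "K \<in> E")
    case True
    hence "kz_d n y (c j) K = (\<Sum>I\<in>U. kz_matrix n y K I * c j I)"
      using l unfolding E_def U_def by (intro kz_d_eq_kz_matrix_sum) auto
    also have "\<dots> = (\<Sum>I\<in>U. kz_matrix n y K I * a I j)"
      by (intro sum.cong refl) (simp add: c_def)
    finally show ?thesis using rel True that by simp
  next
    case False
    thus ?thesis using kz_d_mod[OF c_mod, of y j] unfolding kz_mod_def E_def by blast
  qed
  moreover have "m I = (\<Sum>j<q. f (c j I) * z j)" for I
  proof (cases "I \<in> U")
    case False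
    hence "m I = 0" using m unfolding kz_mod_def U_def by blast
    thus ?thesis using False by (simp add: c_def)
  qed (simp add: m_eq c_def)
  ultimately show ?thesis using c_mod by blast
qed

lemma koszul_regular_map:
  assumes flat: "flat_hom UNIV UNIV f" and reg: "koszul_regular n y"
  shows "koszul_regular n (\<lambda>i. f (y i))"
  unfolding koszul_regular_def
proof (intro allI impI ballI)
  fix l :: nat and m assume l: "1 \<le> l" and m: "m \<in> kz_mod n l"
    and cycle: "kz_d n (\<lambda>i. f (y i)) m = (\<lambda>_. 0)"
  obtain q :: nat and c z where c: "\<forall>j<q. c j \<in> kz_mod n l \<and> kz_d n y (c j) = (\<lambda>_. 0)"
      and m_eq: "m = (\<lambda>I. \<Sum>j<q. f (c j I) * z j)"
    using kz_cycle_map_eq_combination[OF flat l m cycle] by blast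
  have "\<forall>j<q. \<exists>b\<in>kz_mod n (Suc l). kz_d n y b = c j"
    using reg c l unfolding koszul_regular_def by blast
  then obtain b where b: "\<forall>j<q. b j \<in> kz_mod n (Suc l) \<and> kz_d n y (b j) = c j"
    by metis
  have "kz_d n (\<lambda>i. f (y i)) (\<lambda>J. \<Sum>j<q. f (b j J) * z j) K = m K" for K
    unfolding m_eq kz_d_map_combination using b by simp
  moreover have "(\<lambda>J. \<Sum>j<q. f (b j J) * z j) \<in> kz_mod n (Suc l)"
    using b by (intro kz_mod_map_combination) blast
  ultimately show "\<exists>m'\<in>kz_mod n (Suc l). kz_d n (\<lambda>i. f (y i)) m' = m" by fast
qed

end

section \<open>The \<open>\<phi>\<close>-Koszul complex\<close>

lemma skmult_0_left [simp]: "skmult \<Phi> 0 q = 0"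
  by (simp add: skmult_def)

lemma fk_eqI:
  fixes m1 m2 :: "nat set \<times> bool \<Rightarrow> 'a::comm_ring_1 poly"
  assumes "\<And>K k. coeff (m1 (K, False)) k = coeff (m2 (K, False)) k"
    and "\<And>K k. coeff (m1 (K, True)) k = coeff (m2 (K, True)) k"
  shows "m1 = m2"
proof
  fix x :: "nat set \<times> bool"
  obtain K b where "x = (K, b)" by fastforce
  thus "m1 x = m2 x" using assms by (cases b) (auto intro: poly_eqI)
qed

lemma fk_mod_combine:
  assumes "m1 \<in> fk_mod n l" "m2 \<in> fk_mod n l" and "g 0 0 = 0"
  shows "(\<lambda>x. g (m1 x) (m2 x)) \<in> fk_mod n l"
  unfolding fk_mod_def
proof (intro CollectI allI impI)
  fix I b assume "g (m1 (I, b)) (m2 (I, b)) \<noteq> 0"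
  hence "m1 (I, b) \<noteq> 0 \<or> m2 (I, b) \<noteq> 0" using assms(3) by auto
  thus "I \<subseteq> {1..n} \<and> card I + (if b then 1 else 0) = l"
    using assms(1,2) unfolding fk_mod_def by blast
qed

lemma fk_mod_0_eqI:
  assumes "m1 \<in> fk_mod n 0" "m2 \<in> fk_mod n 0" and "m1 ({}, False) = m2 ({}, False)"
  shows "m1 = m2"
proof
  fix x :: "nat set \<times> bool"
  obtain K b where x: "x = (K, b)" by fastforce
  have zero: "m (K, b) = 0" if "m \<in> fk_mod n 0" "(K, b) \<noteq> ({}, False)" for m :: "nat set \<times> bool \<Rightarrow> 'a poly"
  proof (rule ccontr)
    assume "m (K, b) \<noteq> 0"
    hence "K \<subseteq> {1..n}" "card K + (if b then 1 else 0) = 0"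
      using that(1) unfolding fk_mod_def by blast+
    moreover have "finite K" using \<open>K \<subseteq> {1..n}\<close> finite_subset by blast
    ultimately show False using that(2) by (simp split: if_splits)
  qed
  show "m1 x = m2 x"
  proof (cases "x = ({}, False)")
    case False
    thus ?thesis using zero[OF assms(1)] zero[OF assms(2)] x by simp
  qed (use assms(3) in simp)
qed

lemma fk_mod_coeff_bounded:
  assumes "m \<in> fk_mod n l"
  shows "\<exists>D. \<forall>x k. D < k \<longrightarrow> coeff (m x) k = 0"
proof -
  let ?S = "Pow {1..n} \<times> (UNIV :: bool set)"
  define D where "D = Max ((\<lambda>x. degree (m x)) ` ?S)"
  have bounded: "coeff (m (I, b)) k = 0" if "D < k" for I b k
  proof (cases "m (I, b) = 0")
    case False
    hence "(I, b) \<in> ?S" using assms unfolding fk_mod_def by auto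
    hence "degree (m (I, b)) \<le> D" unfolding D_def by simp
    thus ?thesis using that by (simp add: coeff_eq_0)
  qed simp
  show ?thesis
  proof (intro exI allI impI)
    fix x :: "nat set \<times> bool" and k assume "D < k"
    thus "coeff (m x) k = 0" using bounded by (cases x) simp
  qed
qed

lemma coeff_fk_mod_in_kz_mod:
  assumes "m \<in> fk_mod n l"
  shows "(\<lambda>I. coeff (m (I, u)) k) \<in> kz_mod n (l - (if u then 1 else 0))"
  unfolding kz_mod_def
proof (intro CollectI allI impI)
  fix I assume "coeff (m (I, u)) k \<noteq> 0"
  hence "m (I, u) \<noteq> 0" by auto
  thus "I \<subseteq> {1..n} \<and> card I = l - (if u then 1 else 0)"
    using assms unfolding fk_mod_def by fastforce
qed

lemma fk_d_mod:
  assumes "m \<in> fk_mod n l"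
  shows "fk_d n \<Phi> y t m \<in> fk_mod n (l - 1)"
  unfolding fk_mod_def
proof (intro CollectI allI impI)
  fix K b assume nz: "fk_d n \<Phi> y t m (K, b) \<noteq> 0"
  have m: "J \<subseteq> {1..n} \<and> card J + (if u then 1 else 0) = l" if "m (J, u) \<noteq> 0" for J u
    using assms that unfolding fk_mod_def by blast
  have "(\<exists>i\<in>{1..n} - K. m (insert i K, b) \<noteq> 0) \<or> (\<not> b \<and> m (K, True) \<noteq> 0)"
  proof (rule ccontr)
    assume "\<not> ?thesis"
    hence "\<forall>i\<in>{1..n} - K. m (insert i K, b) = 0" "\<not> b \<longrightarrow> m (K, True) = 0" by auto
    thus False using nz by (cases b) (simp_all add: fk_d_def)
  qed
  thus "K \<subseteq> {1..n} \<and> card K + (if b then 1 else 0) = l - 1"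
  proof
    assume "\<exists>i\<in>{1..n} - K. m (insert i K, b) \<noteq> 0"
    then obtain i where i: "i \<in> {1..n} - K" "m (insert i K, b) \<noteq> 0" by blast
    from m[OF i(2)] i(1) have "K \<subseteq> {1..n}" "card (insert i K) + (if b then 1 else 0) = l" by auto
    moreover have "finite K" using \<open>K \<subseteq> {1..n}\<close> finite_subset by blast
    ultimately show ?thesis using i(1) by simp
  next
    assume "\<not> b \<and> m (K, True) \<noteq> 0"
    thus ?thesis using m[of K True] by auto
  qed
qed

definition fk_of_coeffs :: "bool \<Rightarrow> nat \<Rightarrow> (nat \<Rightarrow> nat set \<Rightarrow> 'a::comm_ring_1) \<Rightarrow> nat set \<times> bool \<Rightarrow> 'a poly"
  where "fk_of_coeffs u D g = (\<lambda>(I, b). if b = u then (\<Sum>k\<le>D. monom (g k I) k) else 0)"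

lemma coeff_fk_of_coeffs:
  assumes "\<forall>k>D. g k = (\<lambda>_. 0)"
  shows "coeff (fk_of_coeffs u D g (I, b)) k = (if b = u then g k I else 0)"
  using assms by (auto simp: fk_of_coeffs_def coeff_sum coeff_monom)

lemma fk_of_coeffs_mod:
  assumes "\<forall>k. g k \<in> kz_mod n L" and "\<forall>k>D. g k = (\<lambda>_. 0)"
  shows "fk_of_coeffs u D g \<in> fk_mod n (L + (if u then 1 else 0))"
  unfolding fk_mod_def
proof (intro CollectI allI impI)
  fix I b assume nz: "fk_of_coeffs u D g (I, b) \<noteq> 0"
  hence "b = u" by (simp add: fk_of_coeffs_def split: if_splits)
  moreover have "\<exists>k. g k I \<noteq> 0"
  proof (rule ccontr)
    assume "\<nexists>k. g k I \<noteq> 0"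
    hence "fk_of_coeffs u D g (I, b) = 0"
      by (intro poly_eqI) (simp add: coeff_fk_of_coeffs[OF assms(2)])
    with nz show False by contradiction
  qed
  then obtain k where "g k I \<noteq> 0" by blast
  hence "I \<subseteq> {1..n} \<and> card I = L" using assms(1) unfolding kz_mod_def by blast
  ultimately show "I \<subseteq> {1..n} \<and> card I + (if b then 1 else 0) = L + (if u then 1 else 0)" by simp
qed

lemma exists_fk_of_coeffs:
  assumes "\<forall>k. \<exists>g\<in>kz_mod n L. P k g" and "\<forall>k>D. P k (\<lambda>_. 0)"
  shows "\<exists>m\<in>fk_mod n (L + (if u then 1 else 0)).
           (\<forall>I. m (I, \<not> u) = 0) \<and> (\<forall>k. P k (\<lambda>I. coeff (m (I, u)) k))"
proof -
  have "\<forall>k. \<exists>g. g \<in> kz_mod n L \<and> P k g \<and> (D < k \<longrightarrow> g = (\<lambda>_. 0))"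
    using assms by (metis zero_in_kz_mod)
  then obtain G where G: "\<forall>k. G k \<in> kz_mod n L \<and> P k (G k) \<and> (D < k \<longrightarrow> G k = (\<lambda>_. 0))"
    by metis
  hence G0: "\<forall>k>D. G k = (\<lambda>_. 0)" by blast
  have "(\<lambda>I. coeff (fk_of_coeffs u D G (I, u)) k) = G k" for k
    by (simp add: coeff_fk_of_coeffs[OF G0])
  moreover have "fk_of_coeffs u D G (I, \<not> u) = 0" for I
    by (simp add: fk_of_coeffs_def)
  ultimately show ?thesis using G fk_of_coeffs_mod[OF _ G0, of n L u] by metis
qed

context ring_endo
begin

lemma coeff_fk_d_False:
  "coeff (fk_d n \<Phi> y t m (K, False)) k =
     kz_d n (\<lambda>i. (\<Phi> ^^ k) (y i)) (\<lambda>I. coeff (m (I, False)) k) K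
     + (- 1) ^ card K * ((if k = 0 then 0 else coeff (m (K, True)) (k - 1))
                         - coeff (m (K, True)) k * (\<Phi> ^^ k) (\<Prod>j\<in>K. t j))"
proof -
  have "smult ((- 1) ^ card K) [:- (\<Prod>j\<in>K. t j), 1:]
      = [:(- 1) ^ card K * - (\<Prod>j\<in>K. t j), (- 1) ^ card K:]"
    by simp
  thus ?thesis
    unfolding fk_d_def kz_d_def
    by (simp add: coeff_sum coeff_skmult_const coeff_skmult_linear iter.hom_mult iter.hom_minus_one_power
        iter.hom_minus algebra_simps)
qed

lemma coeff_fk_d_True:
  "coeff (fk_d n \<Phi> y t m (K, True)) k = kz_d n (\<lambda>i. (\<Phi> ^^ Suc k) (y i)) (\<lambda>I. coeff (m (I, True)) k) K"
  unfolding fk_d_def kz_d_def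
  by (simp add: coeff_sum coeff_skmult_const funpow_swap1 iter.hom_mult iter.hom_minus_one_power algebra_simps)

lemma fk_d_add: "fk_d n \<Phi> y t (\<lambda>x. m1 x + m2 x) = (\<lambda>x. fk_d n \<Phi> y t m1 x + fk_d n \<Phi> y t m2 x)"
  by (rule fk_eqI) (simp_all add: coeff_fk_d_False coeff_fk_d_True kz_d_add algebra_simps)

lemma fk_d_diff: "fk_d n \<Phi> y t (\<lambda>x. m1 x - m2 x) = (\<lambda>x. fk_d n \<Phi> y t m1 x - fk_d n \<Phi> y t m2 x)"
  by (rule fk_eqI) (simp_all add: coeff_fk_d_False coeff_fk_d_True kz_d_diff algebra_simps)

text \<open>If \<open>m = c e\<^sub>\<emptyset>\<close> and \<open>c(1) = \<Sum> r\<^sub>i y\<^sub>i\<close>, then \<open>c - \<Sum> r\<^sub>i y\<^sub>i\<close> vanishes at \<open>\<Theta> = 1\<close>, so it is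
  \<open>(\<Theta> - 1) b\<close>, and \<open>\<Sum> r\<^sub>i e\<^sub>i + b e\<^sub>\<emptyset> \<and> u\<close> is a preimage of \<open>m\<close>.\<close>

lemma fk_d_onto_ker_fk_aug:
  assumes m: "m \<in> fk_mod n 0" and aug: "fk_aug m \<in> gen_ideal n y"
  shows "\<exists>m'\<in>fk_mod n 1. fk_d n \<Phi> y t m' = m"
proof -
  obtain r where r: "poly (m ({}, False)) 1 = (\<Sum>i\<in>{1..n}. r i * y i)"
    using aug unfolding fk_aug_def gen_ideal_iff by blast
  have "poly (m ({}, False) - [:\<Sum>i\<in>{1..n}. r i * y i:]) 1 = 0" using r by simp
  then obtain b where b: "m ({}, False) - [:\<Sum>i\<in>{1..n}. r i * y i:] = [:- 1, 1:] * b"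
    unfolding poly_eq_0_iff_dvd by (metis dvdE)
  define m' where "m' = (\<lambda>(I, u). if u then (if I = {} then b else 0)
      else if \<exists>i\<in>{1..n}. I = {i} then [:r (the_elem I):] else 0)"
  have m'_mod: "m' \<in> fk_mod n 1" by (auto simp: m'_def fk_mod_def)
  have "m' ({}, True) = b" by (simp add: m'_def)
  hence "fk_d n \<Phi> y t m' ({}, False)
      = (\<Sum>i\<in>{1..n}. skmult \<Phi> (m' ({i}, False)) [:y i:]) + skmult \<Phi> b [:- 1, 1:]"
    by (simp add: fk_d_def)
  also have "(\<Sum>i\<in>{1..n}. skmult \<Phi> (m' ({i}, False)) [:y i:]) = (\<Sum>i\<in>{1..n}. [:r i * y i:])"
    by (intro sum.cong refl) (auto simp: m'_def skmult_const_const)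
  also have "skmult \<Phi> b [:- 1, 1:] = [:- 1, 1:] * b" by (rule skmult_X_minus_one)
  also have "(\<Sum>i\<in>{1..n}. [:r i * y i:]) + [:- 1, 1:] * b = m ({}, False)"
    using b unfolding sum_to_poly diff_eq_eq by (simp add: add.commute)
  finally have "fk_d n \<Phi> y t m' ({}, False) = m ({}, False)" .
  moreover have "fk_d n \<Phi> y t m' \<in> fk_mod n 0" using fk_d_mod[OF m'_mod] by simp
  ultimately show ?thesis using fk_mod_0_eqI[OF _ m] m'_mod by blast
qed

end

locale fk_complex = ring_endo \<Phi> for \<Phi> :: "'a::comm_ring_1 \<Rightarrow> 'a" +
  fixes n :: nat and y t :: "nat \<Rightarrow> 'a"
  assumes twist: "i \<in> {1..n} \<Longrightarrow> \<Phi> (y i) = t i * y i"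
begin

abbreviation d :: "(nat set \<times> bool \<Rightarrow> 'a poly) \<Rightarrow> nat set \<times> bool \<Rightarrow> 'a poly"
  where "d \<equiv> fk_d n \<Phi> y t"

abbreviation y_iter :: "nat \<Rightarrow> nat \<Rightarrow> 'a"
  where "y_iter k \<equiv> \<lambda>i. (\<Phi> ^^ k) (y i)"

lemma funpow_Suc_twist:
  "i \<in> {1..n} \<Longrightarrow> (\<Phi> ^^ Suc j) (y i) = (\<Phi> ^^ j) (t i) * (\<Phi> ^^ j) (y i)"
  by (simp add: funpow_swap1 twist iter.hom_mult)

text \<open>The relation \<open>\<Phi>(y\<^sub>i) = t\<^sub>i y\<^sub>i\<close> makes the coupling \<open>h \<mapsto> (-1)\<^bsup>|I|\<^esup> (\<Theta> - t\<^sub>I) h\<close> between the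
  Koszul complexes of \<open>\<Phi>\<^bsup>k+1\<^esup>(y)\<close> and \<open>\<Phi>\<^bsup>k\<^esup>(y)\<close> anticommute with the Koszul differentials.\<close>

lemma kz_d_coupling:
  assumes "finite K"
  shows "kz_d n (y_iter k) (\<lambda>I. (- 1) ^ card I * (hp I - h I * (\<Phi> ^^ k) (\<Prod>j\<in>I. t j))) K
     = - ((- 1) ^ card K * (kz_d n (y_iter k) hp K
          - (\<Phi> ^^ k) (\<Prod>j\<in>K. t j) * kz_d n (y_iter (Suc k)) h K))"
proof -
  let ?s = "\<lambda>i. (- 1) ^ card {j\<in>K. j < i} :: 'a"
  let ?T = "(\<Phi> ^^ k) (\<Prod>j\<in>K. t j)"
  have "kz_d n (y_iter k) (\<lambda>I. (- 1) ^ card I * (hp I - h I * (\<Phi> ^^ k) (\<Prod>j\<in>I. t j))) K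
     = (\<Sum>i\<in>{1..n} - K. - ((- 1) ^ card K * (?s i * (\<Phi> ^^ k) (y i) * hp (insert i K)
          - ?T * (?s i * (\<Phi> ^^ Suc k) (y i) * h (insert i K)))))"
    unfolding kz_d_def
  proof (rule sum.cong[OF refl])
    fix i assume i: "i \<in> {1..n} - K"
    have c: "card (insert i K) = Suc (card K)" and p: "(\<Prod>j\<in>insert i K. t j) = t i * (\<Prod>j\<in>K. t j)"
      using i assms by simp_all
    have y: "(\<Phi> ^^ Suc k) (y i) = (\<Phi> ^^ k) (t i) * (\<Phi> ^^ k) (y i)"
      using i by (intro funpow_Suc_twist) simp
    show "?s i * (\<Phi> ^^ k) (y i) * ((- 1) ^ card (insert i K)
          * (hp (insert i K) - h (insert i K) * (\<Phi> ^^ k) (\<Prod>j\<in>insert i K. t j)))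
        = - ((- 1) ^ card K * (?s i * (\<Phi> ^^ k) (y i) * hp (insert i K)
          - ?T * (?s i * (\<Phi> ^^ Suc k) (y i) * h (insert i K))))"
      unfolding c p y iter.hom_mult by (simp add: algebra_simps)
  qed
  also have "\<dots> = - ((- 1) ^ card K * (kz_d n (y_iter k) hp K - ?T * kz_d n (y_iter (Suc k)) h K))"
    unfolding kz_d_def
    by (simp add: sum_negf sum_subtractf sum_distrib_left right_diff_distrib mult.assoc)
  finally show ?thesis .
qed

lemma coeff_fk_d_fk_d_True: "coeff (d (d m) (K, True)) k = 0"
proof -
  have "(\<lambda>I. coeff (d m (I, True)) k) = kz_d n (y_iter (Suc k)) (\<lambda>I. coeff (m (I, True)) k)"
    by (rule ext) (rule coeff_fk_d_True)
  thus ?thesis by (simp add: coeff_fk_d_True kz_d_kz_d)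
qed

lemma coeff_fk_d_fk_d_False:
  assumes "finite K"
  shows "coeff (d (d m) (K, False)) k = 0"
proof -
  define g where "g = (\<lambda>I. coeff (m (I, False)) k)"
  define h where "h = (\<lambda>I. coeff (m (I, True)) k)"
  define hp where "hp = (\<lambda>I. if k = 0 then 0 else coeff (m (I, True)) (k - 1))"
  define T where "T = (\<Phi> ^^ k) (\<Prod>j\<in>K. t j)"
  have d_u: "coeff (d m (K, True)) k = kz_d n (y_iter (Suc k)) h K"
    unfolding h_def by (rule coeff_fk_d_True)
  have d_u_prev: "(if k = 0 then 0 else coeff (d m (K, True)) (k - 1)) = kz_d n (y_iter k) hp K"
    by (cases k) (simp_all add: hp_def coeff_fk_d_True)
  have d_e: "(\<lambda>I. coeff (d m (I, False)) k) = (\<lambda>I. kz_d n (y_iter k) g I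
      + (- 1) ^ card I * (hp I - h I * (\<Phi> ^^ k) (\<Prod>j\<in>I. t j)))"
    unfolding g_def h_def hp_def by (rule ext) (rule coeff_fk_d_False)
  have "coeff (d (d m) (K, False)) k = kz_d n (y_iter k) (\<lambda>I. coeff (d m (I, False)) k) K
      + (- 1) ^ card K * ((if k = 0 then 0 else coeff (d m (K, True)) (k - 1))
                          - coeff (d m (K, True)) k * T)"
    unfolding T_def by (rule coeff_fk_d_False)
  also have "\<dots> = kz_d n (y_iter k) (kz_d n (y_iter k) g) K
      + kz_d n (y_iter k) (\<lambda>I. (- 1) ^ card I * (hp I - h I * (\<Phi> ^^ k) (\<Prod>j\<in>I. t j))) K
      + (- 1) ^ card K * (kz_d n (y_iter k) hp K - kz_d n (y_iter (Suc k)) h K * T)"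
    by (simp only: d_e d_u d_u_prev kz_d_add)
  also have "\<dots> = 0"
    unfolding kz_d_kz_d kz_d_coupling[OF \<open>finite K\<close>] T_def by (simp add: algebra_simps)
  finally show ?thesis .
qed

lemma fk_d_fk_d:
  assumes m: "m \<in> fk_mod n l"
  shows "d (d m) = (\<lambda>_. 0)"
proof (rule fk_eqI)
  fix K k
  have "d (d m) (K, False) = 0" if "infinite K"
  proof -
    have "\<not> K \<subseteq> {1..n}" using that by (meson finite_atLeastAtMost finite_subset)
    thus ?thesis using fk_d_mod[OF fk_d_mod[OF m]] unfolding fk_mod_def by blast
  qed
  thus "coeff (d (d m) (K, False)) k = coeff 0 k"
    using coeff_fk_d_fk_d_False[of K m k] by (cases "finite K") simp_all
  show "coeff (d (d m) (K, True)) k = coeff 0 k" by (simp add: coeff_fk_d_fk_d_True)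
qed

lemma gen_ideal_y_iter_Suc: "x \<in> gen_ideal n (y_iter (Suc j)) \<Longrightarrow> x \<in> gen_ideal n (y_iter j)"
proof -
  assume "x \<in> gen_ideal n (y_iter (Suc j))"
  then obtain c where "x = (\<Sum>i\<in>{1..n}. c i * (\<Phi> ^^ Suc j) (y i))"
    unfolding gen_ideal_iff by blast
  also have "\<dots> = (\<Sum>i\<in>{1..n}. (c i * (\<Phi> ^^ j) (t i)) * (\<Phi> ^^ j) (y i))"
    by (intro sum.cong refl) (simp add: funpow_Suc_twist mult.assoc del: funpow.simps)
  finally show ?thesis unfolding gen_ideal_iff by (rule exI[of _ "\<lambda>i. c i * (\<Phi> ^^ j) (t i)"])
qed

lemma gen_ideal_y_iter: "x \<in> gen_ideal n (y_iter j) \<Longrightarrow> x \<in> gen_ideal n y"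
  by (induction j) (simp_all add: gen_ideal_y_iter_Suc)

lemma fk_aug_fk_d: "fk_aug (d m) \<in> gen_ideal n y"
proof -
  have "fk_aug (d m) = (\<Sum>i\<in>{1..n}. skact \<Phi> (m ({i}, False)) (y i))"
    unfolding fk_aug_def fk_d_def by (simp add: poly_sum poly_skmult_one)
  also have "\<dots> \<in> gen_ideal n y"
  proof (rule gen_ideal_sum)
    fix i assume "i \<in> {1..n}"
    hence "(\<Phi> ^^ j) (y i) \<in> gen_ideal n y" for j
      using gen_ideal_generator[of i n "y_iter j"] gen_ideal_y_iter by blast
    thus "skact \<Phi> (m ({i}, False)) (y i) \<in> gen_ideal n y"
      unfolding skact_def by (intro gen_ideal_sum gen_ideal_mult)
  qed
  finally show ?thesis .
qed

text \<open>In degree one the \<open>u\<close>-part is a single polynomial \<open>c\<close>, and the \<open>e\<^sub>\<emptyset>\<close>-component of the cycle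
  condition reads \<open>c\<^sub>k = c\<^sub>k\<^sub>+\<^sub>1 - \<Sum> \<Phi>\<^bsup>k+1\<^esup>(y\<^sub>i) a\<^sub>i\<close>; descending induction from the degree of \<open>c\<close> puts
  every \<open>c\<^sub>k\<close> into the ideal of \<open>\<Phi>\<^bsup>k+1\<^esup>(y)\<close>.\<close>

lemma fk_cycle_u_coeff_in_gen_ideal:
  assumes m: "m \<in> fk_mod n 1" and cycle: "d m = (\<lambda>_. 0)"
  shows "coeff (m ({}, True)) k \<in> gen_ideal n (y_iter (Suc k))"
proof -
  obtain D where D: "\<forall>x k. D < k \<longrightarrow> coeff (m x) k = 0"
    using fk_mod_coeff_bounded[OF m] by blast
  let ?c = "\<lambda>k. coeff (m ({}, True)) k"
  have step: "?c k = ?c (Suc k) - kz_d n (y_iter (Suc k)) (\<lambda>I. coeff (m (I, False)) (Suc k)) {}" for k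
    using coeff_fk_d_False[of n y t m "{}" "Suc k"] cycle by (simp add: algebra_simps)
  have descend: "?c k \<in> gen_ideal n (y_iter (Suc k))" if "D < k + N" for N k
    using that
  proof (induction N arbitrary: k)
    case 0
    thus ?case using D by simp
  next
    case (Suc N)
    hence "?c (Suc k) \<in> gen_ideal n (y_iter (Suc (Suc k)))" using Suc.IH[of "Suc k"] by simp
    hence "?c (Suc k) \<in> gen_ideal n (y_iter (Suc k))" by (rule gen_ideal_y_iter_Suc)
    thus ?case unfolding step[of k] by (intro gen_ideal_diff kz_d_empty_in_gen_ideal)
  qed
  show ?thesis using descend[of k "Suc D"] by simp
qed

end

section \<open>Exactness\<close>

locale fk_exact = fk_complex +
  assumes flat: "flat_hom UNIV UNIV \<Phi>" and regular: "koszul_regular n y"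
begin

lemma koszul_regular_y_iter: "koszul_regular n (y_iter k)"
proof (induction k)
  case 0
  show ?case using regular by simp
next
  case (Suc k)
  from koszul_regular_map[OF flat this] show ?case by simp
qed

lemma fk_cycle_u_coeff_is_boundary:
  assumes m: "m \<in> fk_mod n l" and l: "1 \<le> l" and cycle: "d m = (\<lambda>_. 0)"
  shows "\<exists>g\<in>kz_mod n l. kz_d n (y_iter (Suc k)) g = (\<lambda>I. coeff (m (I, True)) k)"
proof (cases "l = 1")
  case True
  have "coeff (m (I, True)) k = (if I = {} then coeff (m ({}, True)) k else 0)" for I
  proof (cases "m (I, True) = 0")
    case False
    hence "I \<subseteq> {1..n} \<and> card I + (if True then 1 else 0) = l" using m unfolding fk_mod_def by blast
    hence "I \<subseteq> {1..n}" "card I = 0" using True by auto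
    hence "I = {}" by (metis card_eq_0_iff finite_atLeastAtMost finite_subset)
    thus ?thesis by simp
  qed auto
  hence "(\<lambda>I. coeff (m (I, True)) k) = (\<lambda>I. if I = {} then coeff (m ({}, True)) k else 0)"
    by blast
  moreover have "m \<in> fk_mod n 1" using m True by simp
  ultimately show ?thesis
    using kz_d_onto_gen_ideal[OF fk_cycle_u_coeff_in_gen_ideal] cycle True by simp
next
  case False
  have "(\<lambda>I. coeff (m (I, True)) k) \<in> kz_mod n (l - 1)"
    using coeff_fk_mod_in_kz_mod[OF m, of True k] by simp
  moreover have "kz_d n (y_iter (Suc k)) (\<lambda>I. coeff (m (I, True)) k) = (\<lambda>_. 0)"
  proof
    fix K
    show "kz_d n (y_iter (Suc k)) (\<lambda>I. coeff (m (I, True)) k) K = 0"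
      using coeff_fk_d_True[of n y t m K k] cycle by simp
  qed
  moreover have "1 \<le> l - 1" using False l by simp
  ultimately obtain g where "g \<in> kz_mod n (Suc (l - 1))"
      "kz_d n (y_iter (Suc k)) g = (\<lambda>I. coeff (m (I, True)) k)"
    using koszul_regular_y_iter[of "Suc k"] unfolding koszul_regular_def by blast
  moreover have "Suc (l - 1) = l" using l by simp
  ultimately show ?thesis by auto
qed

lemma fk_lift_u_part:
  assumes m: "m \<in> fk_mod n l" and l: "1 \<le> l" and cycle: "d m = (\<lambda>_. 0)"
  shows "\<exists>m'\<in>fk_mod n (Suc l). \<forall>K. d m' (K, True) = m (K, True)"
proof -
  obtain D where D: "\<forall>x k. D < k \<longrightarrow> coeff (m x) k = 0"
    using fk_mod_coeff_bounded[OF m] by blast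
  have "\<forall>k>D. kz_d n (y_iter (Suc k)) (\<lambda>_. 0) = (\<lambda>I. coeff (m (I, True)) k)"
    using D by auto
  moreover have "\<forall>k. \<exists>g\<in>kz_mod n l. kz_d n (y_iter (Suc k)) g = (\<lambda>I. coeff (m (I, True)) k)"
    using fk_cycle_u_coeff_is_boundary[OF m l cycle] by blast
  ultimately obtain m' where m': "m' \<in> fk_mod n (l + (if True then 1 else 0))" and
    coeffs: "\<forall>k. kz_d n (y_iter (Suc k)) (\<lambda>I. coeff (m' (I, True)) k) = (\<lambda>I. coeff (m (I, True)) k)"
    using exists_fk_of_coeffs[where u = True and D = D and
        P = "\<lambda>k g. kz_d n (y_iter (Suc k)) g = (\<lambda>I. coeff (m (I, True)) k)"]
    by blast
  have "coeff (d m' (K, True)) k = coeff (m (K, True)) k" for K k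
    using coeff_fk_d_True[of n y t m' K k] fun_cong[OF coeffs[rule_format, of k], of K] by simp
  hence "\<forall>K. d m' (K, True) = m (K, True)" by (simp add: poly_eqI)
  thus ?thesis using m' by auto
qed

lemma fk_lift_cycle_without_u_part:
  assumes m: "m \<in> fk_mod n l" and l: "1 \<le> l" and cycle: "d m = (\<lambda>_. 0)"
    and no_u: "\<forall>I. m (I, True) = 0"
  shows "\<exists>m'\<in>fk_mod n (Suc l). d m' = m"
proof -
  obtain D where D: "\<forall>x k. D < k \<longrightarrow> coeff (m x) k = 0"
    using fk_mod_coeff_bounded[OF m] by blast
  have "\<exists>g\<in>kz_mod n (Suc l). kz_d n (y_iter k) g = (\<lambda>I. coeff (m (I, False)) k)" for k
  proof -
    have "(\<lambda>I. coeff (m (I, False)) k) \<in> kz_mod n l"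
      using coeff_fk_mod_in_kz_mod[OF m, of False k] by simp
    moreover have "kz_d n (y_iter k) (\<lambda>I. coeff (m (I, False)) k) = (\<lambda>_. 0)"
    proof
      fix K
      show "kz_d n (y_iter k) (\<lambda>I. coeff (m (I, False)) k) K = 0"
        using coeff_fk_d_False[of n y t m K k] cycle no_u by (simp cong: if_cong)
    qed
    ultimately show ?thesis using koszul_regular_y_iter l unfolding koszul_regular_def by blast
  qed
  moreover have "\<forall>k>D. kz_d n (y_iter k) (\<lambda>_. 0) = (\<lambda>I. coeff (m (I, False)) k)"
    using D by auto
  ultimately obtain m' where m': "m' \<in> fk_mod n (Suc l + (if False then 1 else 0))"
    and m'_u: "\<forall>I. m' (I, \<not> False) = 0"
    and coeffs: "\<forall>k. kz_d n (y_iter k) (\<lambda>I. coeff (m' (I, False)) k) = (\<lambda>I. coeff (m (I, False)) k)"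
    using exists_fk_of_coeffs[where u = False and D = D and
        P = "\<lambda>k g. kz_d n (y_iter k) g = (\<lambda>I. coeff (m (I, False)) k)"]
    by blast
  have "d m' = m"
  proof (rule fk_eqI)
    fix K k
    show "coeff (d m' (K, False)) k = coeff (m (K, False)) k"
      using coeff_fk_d_False[of n y t m' K k] fun_cong[OF coeffs[rule_format, of k], of K] m'_u no_u
      by simp
    show "coeff (d m' (K, True)) k = coeff (m (K, True)) k"
      using coeff_fk_d_True[of n y t m' K k] m'_u no_u by simp
  qed
  thus ?thesis using m' by auto
qed

lemma fk_exact_at_positive_degree:
  assumes m: "m \<in> fk_mod n l" and l: "1 \<le> l" and cycle: "d m = (\<lambda>_. 0)"
  shows "\<exists>m'\<in>fk_mod n (Suc l). d m' = m"
proof -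
  obtain b where b: "b \<in> fk_mod n (Suc l)" "\<forall>K. d b (K, True) = m (K, True)"
    using fk_lift_u_part[OF m l cycle] by blast
  define r where "r = (\<lambda>x. m x - d b x)"
  have "r \<in> fk_mod n l"
    unfolding r_def using fk_mod_combine[OF m, of "d b" "(-)"] fk_d_mod[OF b(1)] by simp
  moreover have "d r = (\<lambda>_. 0)"
    unfolding r_def fk_d_diff cycle fk_d_fk_d[OF b(1)] by simp
  moreover have "\<forall>I. r (I, True) = 0" using b(2) by (simp add: r_def)
  ultimately obtain a where a: "a \<in> fk_mod n (Suc l)" "d a = r"
    using fk_lift_cycle_without_u_part l by blast
  have "(\<lambda>x. a x + b x) \<in> fk_mod n (Suc l)" using fk_mod_combine[OF a(1) b(1), of "(+)"] by simp
  moreover have "d (\<lambda>x. a x + b x) = m" unfolding fk_d_add a(2) r_def by simp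
  ultimately show ?thesis by blast
qed

end

section \<open>The twisting relation\<close>

lemma mp_var_in_poly_ring:
  fixes K :: "'a::comm_ring_1 set"
  assumes "is_subring K" and "i \<in> {1..n}"
  shows "mp_var i \<in> poly_ring K n"
  unfolding poly_ring_def mp_var_def
proof (intro CollectI conjI allI ballI)
  fix \<mu>
  show "Poly_Mapping.lookup (Poly_Mapping.single (Poly_Mapping.single i 1) (1::'a)) \<mu> \<in> K"
    using assms(1) unfolding is_subring_def
    by (cases "Poly_Mapping.single i 1 = \<mu>") (simp_all add: lookup_single_not_eq)
next
  fix \<mu> assume "\<mu> \<in> Poly_Mapping.keys (Poly_Mapping.single (Poly_Mapping.single i (1::nat)) (1::'a))"
  hence "\<mu> = Poly_Mapping.single i 1" by (simp split: if_splits)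
  thus "Poly_Mapping.keys \<mu> \<subseteq> {1..n}" using assms(2) by simp
qed

lemma commuting_homs_twist:
  fixes K :: "'a::comm_ring_1 set" and \<Phi> :: "'a \<Rightarrow> 'a"
  assumes "is_subring K" and i: "i \<in> {1..n}" and s: "s \<in> poly_ring K n"
    and \<psi>: "ring_hom_on (poly_ring K n) \<psi>" and \<phi>_var: "\<phi> (mp_var i) = s * mp_var i"
    and comm: "\<forall>p\<in>poly_ring K n. \<Phi> (\<psi> p) = \<psi> (\<phi> p)"
  shows "\<Phi> (\<psi> (mp_var i)) = \<psi> s * \<psi> (mp_var i)"
proof -
  have x_i: "mp_var i \<in> poly_ring K n" by (rule mp_var_in_poly_ring[OF assms(1) i])
  hence "\<Phi> (\<psi> (mp_var i)) = \<psi> (s * mp_var i)" using comm \<phi>_var by simp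
  thus ?thesis using \<psi> s x_i unfolding ring_hom_on_def by simp
qed

theorem theorem3:
  fixes K :: "'a::comm_ring_1 set"
    and n :: nat
    and y :: "nat \<Rightarrow> 'a"
    and s :: "nat \<Rightarrow> 'a mpoly"
    and \<phi> :: "'a mpoly \<Rightarrow> 'a mpoly"
    and \<psi> :: "'a mpoly \<Rightarrow> 'a"
    and \<Phi> :: "'a \<Rightarrow> 'a"
  assumes noeth: "noetherian_ring TYPE('a)"
    and subring: "is_subring K"
    and phi_hom: "ring_hom_on (poly_ring K n) \<phi>"
    and phi_maps: "\<forall>p\<in>poly_ring K n. \<phi> p \<in> poly_ring K n"
    and phi_K: "\<forall>c\<in>K. \<phi> (mp_const c) = mp_const c"
    and s_in: "\<forall>i\<in>{1..n}. s i \<in> poly_ring K n \<and> s i \<noteq> 0"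
    and phi_var: "\<forall>i\<in>{1..n}. \<phi> (mp_var i) = s i * mp_var i"
    and phi_flat: "flat_hom (poly_ring K n) (poly_ring K n) \<phi>"
    and psi_hom: "ring_hom_on (poly_ring K n) \<psi>"
    and psi_K: "\<forall>c\<in>K. \<psi> (mp_const c) = c"
    and psi_var: "\<forall>i\<in>{1..n}. \<psi> (mp_var i) = y i"
    and Phi_hom: "ring_hom_on UNIV \<Phi>"
    and Phi_K: "\<forall>c\<in>K. \<Phi> c = c"
    and comm: "\<forall>p\<in>poly_ring K n. \<Phi> (\<psi> p) = \<psi> (\<phi> p)"
    and Phi_flat: "flat_hom UNIV UNIV \<Phi>"
    and regular: "koszul_regular n y"
  defines "t \<equiv> (\<lambda>i. \<psi> (s i))"
  shows
    \<comment> \<open>it is a complex\<close>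
    "(\<forall>l. \<forall>m\<in>fk_mod n l. fk_d n \<Phi> y t m \<in> fk_mod n (l - 1) \<and>
                          fk_d n \<Phi> y t (fk_d n \<Phi> y t m) = (\<lambda>_. 0))
     \<comment> \<open>the augmentation is surjective and left A[\<Theta>;\<Phi>]-linear into A/I_n\<close>
     \<and> (\<forall>a. \<exists>m\<in>fk_mod n 0. fk_aug m = (a::'a))
     \<and> (\<forall>c. \<forall>m\<in>fk_mod n 0. fk_aug (\<lambda>b. skmult \<Phi> c (m b)) - skact \<Phi> c (fk_aug m)
                                \<in> gen_ideal n y)
     \<comment> \<open>exactness at FK_0: ker(augmentation) = im \<partial>_1\<close>
     \<and> (\<forall>m\<in>fk_mod n 0. fk_aug m \<in> gen_ideal n y \<longleftrightarrow>
                         (\<exists>m'\<in>fk_mod n 1. fk_d n \<Phi> y t m' = m))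
     \<comment> \<open>exactness at FK_l, l \<ge> 1 (including injectivity of \<partial>_(n+1))\<close>
     \<and> (\<forall>l\<ge>1. \<forall>m\<in>fk_mod n l. fk_d n \<Phi> y t m = (\<lambda>_. 0) \<longrightarrow>
                         (\<exists>m'\<in>fk_mod n (Suc l). fk_d n \<Phi> y t m' = m))"
proof -
  have twist: "\<Phi> (y i) = t i * y i" if i: "i \<in> {1..n}" for i
  proof -
    have "\<Phi> (\<psi> (mp_var i)) = \<psi> (s i) * \<psi> (mp_var i)"
      using s_in phi_var i by (intro commuting_homs_twist[OF subring i _ psi_hom _ comm]) auto
    thus ?thesis using psi_var i unfolding t_def by simp
  qed
  interpret fk_exact \<Phi> n y t
    by unfold_locales (use Phi_hom twist Phi_flat regular in auto)
  show ?thesis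
  proof (intro conjI allI ballI impI)
    fix l and m :: "nat set \<times> bool \<Rightarrow> 'a poly" assume m: "m \<in> fk_mod n l"
    show "fk_d n \<Phi> y t m \<in> fk_mod n (l - 1)" by (rule fk_d_mod[OF m])
    show "fk_d n \<Phi> y t (fk_d n \<Phi> y t m) = (\<lambda>_. 0)" by (rule fk_d_fk_d[OF m])
  next
    fix a :: 'a
    have "(\<lambda>x. if x = ({}, False) then [:a:] else 0) \<in> fk_mod n 0" by (simp add: fk_mod_def)
    thus "\<exists>m\<in>fk_mod n 0. fk_aug m = a" by (force simp: fk_aug_def)
  next
    fix c and m :: "nat set \<times> bool \<Rightarrow> 'a poly"
    show "fk_aug (\<lambda>b. skmult \<Phi> c (m b)) - skact \<Phi> c (fk_aug m) \<in> gen_ideal n y"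
      by (simp add: fk_aug_def poly_skmult_one)
  next
    fix m :: "nat set \<times> bool \<Rightarrow> 'a poly" assume "m \<in> fk_mod n 0"
    thus "fk_aug m \<in> gen_ideal n y \<longleftrightarrow> (\<exists>m'\<in>fk_mod n 1. fk_d n \<Phi> y t m' = m)"
      using fk_d_onto_ker_fk_aug fk_aug_fk_d by blast
  next
    fix l and m :: "nat set \<times> bool \<Rightarrow> 'a poly" assume "1 \<le> l" "m \<in> fk_mod n l" "fk_d n \<Phi> y t m = (\<lambda>_. 0)"
    thus "\<exists>m'\<in>fk_mod n (Suc l). fk_d n \<Phi> y t m' = m" using fk_exact_at_positive_degree by blast
  qed
qed

end
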